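(* Let $\tilde c_{g,1}$ be the number of NSG-compositions $x_1+\cdots+x_{m-1}$ of genus $g$ with $x_{m-1}=3$ and all other parts $x_1,\dots,x_{m-2}$ in $\{1,2\}$. Then $$\sum_{g\ge3}\tilde c_{g,1}q^g=\frac{1+q^2}{1-(2q^3+q^4)}\,q^3,$$ and in particular $\sum_g\tilde c_{g,1}\omega^{-g}=\omega^{-1}+\omega^{-3}=0.854101966\ldots$, where $\omega=\frac{1+\sqrt5}2$.
   Context: An NSG-composition is a composition $x_1+\cdots+x_{m-1}$ of positive integers satisfying $x_{s+t}\le x_s+x_t$ and $x_{m-s-t}\le x_{m-s}+x_{m-t}+1$ for all $s,t\ge1$, $s+t<m$ (equivalently, the Kunz vector of a numerical semigroup of multiplicity $m$); its genus is $\sum x_j$. *)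

theory Defs
  imports Complex_Main "HOL-Computational_Algebra.Formal_Power_Series"
begin

text \<open>A composition x_1 + ... + x_(m-1) is represented by the list xs of its parts,
  with x_j = xs ! (j - 1) and m = length xs + 1.\<close>

definition nsg_comp :: "nat list \<Rightarrow> bool" where
  "nsg_comp xs \<longleftrightarrow>
     (\<forall>j < length xs. 0 < xs ! j) \<and>
     (let m = length xs + 1; x = (\<lambda>j. xs ! (j - 1)) in
        \<forall>s t. 1 \<le> s \<longrightarrow> 1 \<le> t \<longrightarrow> s + t < m \<longrightarrow>
          x (s + t) \<le> x s + x t \<and> x (m - s - t) \<le> x (m - s) + x (m - t) + 1)"

definition genus :: "nat list \<Rightarrow> nat" where
  "genus xs = sum_list xs"

definition ctilde1 :: "nat \<Rightarrow> nat" where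
  "ctilde1 g = card {xs. nsg_comp xs \<and> genus xs = g \<and> xs \<noteq> [] \<and> last xs = 3 \<and>
                        (\<forall>i < length xs - 1. xs ! i \<in> {1, 2})}"

end

theory Submission
  imports Defs
begin

text \<open>Write the composition as \<open>ys @ [3]\<close> with all parts of \<open>ys\<close> in \<open>{1, 2}\<close>. Every
  NSG inequality then holds automatically except \<open>x_(m-1) = 3 \<le> x_s + x_t\<close> for
  \<open>s + t = m - 1\<close>, which forbids two mirror-image parts of \<open>ys\<close> from both being 1.
  Peeling off the outermost pair of parts, which must be \<open>(1,2)\<close>, \<open>(2,1)\<close> or \<open>(2,2)\<close>,
  gives the recurrence \<open>a_h = 2 a_(h-3) + a_(h-4)\<close> for the number \<open>a_h\<close> of such \<open>ys\<close>
  with sum \<open>h\<close>, hence the generating function. At \<open>q = 1/\<omega>\<close> we have \<open>q^2 = 1 - q\<close>,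
  so \<open>1 - 2q^3 - q^4 = q^2\<close> and the series evaluates to \<open>q + q^3\<close>.\<close>

definition no_mirrored_ones :: "nat list \<Rightarrow> bool" where
  "no_mirrored_ones ys \<longleftrightarrow> list_all2 (\<lambda>a b. \<not> (a = 1 \<and> b = 1)) ys (rev ys)"

lemma no_mirrored_ones_nth:
  "no_mirrored_ones ys \<longleftrightarrow>
     (\<forall>i < length ys. \<not> (ys ! i = 1 \<and> ys ! (length ys - Suc i) = 1))"
  by (auto simp: no_mirrored_ones_def list_all2_conv_all_nth rev_nth)

lemma no_mirrored_ones_Cons_snoc:
  "no_mirrored_ones (a # zs @ [b]) \<longleftrightarrow> \<not> (a = 1 \<and> b = 1) \<and> no_mirrored_ones zs"
  by (auto simp: no_mirrored_ones_def list_all2_append)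

lemma nsg_comp_snoc_3_iff:
  assumes parts: "set ys \<subseteq> {1, 2}"
  shows "nsg_comp (ys @ [3]) \<longleftrightarrow> no_mirrored_ones ys"
proof
  assume nsg: "nsg_comp (ys @ [3])"
  show "no_mirrored_ones ys" unfolding no_mirrored_ones_nth
  proof (intro allI impI notI)
    fix i assume i: "i < length ys" and ones: "ys ! i = 1 \<and> ys ! (length ys - Suc i) = 1"
    have "\<forall>s t. 1 \<le> s \<longrightarrow> 1 \<le> t \<longrightarrow> s + t < length ys + 2 \<longrightarrow>
            (ys @ [3]) ! (s + t - 1) \<le> (ys @ [3]) ! (s - 1) + (ys @ [3]) ! (t - 1)"
      using nsg unfolding nsg_comp_def Let_def by auto
    from this[rule_format, of "Suc i" "length ys - i"]
    have "(ys @ [3]) ! length ys \<le> (ys @ [3]) ! i + (ys @ [3]) ! (length ys - Suc i)"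
      using i by (simp add: Suc_diff_Suc)
    moreover have "length ys - Suc i < length ys" using i by simp
    ultimately show False
      using i ones by (simp add: nth_append)
  qed
next
  assume no_ones: "no_mirrored_ones ys"
  let ?x = "\<lambda>j. (ys @ [3]) ! (j - 1)" and ?n = "length ys"
  have part_in: "ys ! (j - 1) \<in> {1, 2}" if "1 \<le> j" "j \<le> ?n" for j
    using subsetD[OF parts nth_mem[of "j - 1" ys]] that by simp
  have lo: "1 \<le> ?x j" if "1 \<le> j" "j \<le> ?n + 1" for j
    using part_in[of j] that by (cases "j \<le> ?n") (auto simp: nth_append)
  have hi: "?x j \<le> 2" if "1 \<le> j" "j \<le> ?n" for j
    using part_in[of j] that by (auto simp: nth_append)
  show "nsg_comp (ys @ [3])" unfolding nsg_comp_def Let_def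
  proof (intro conjI allI impI)
    fix j assume "j < length (ys @ [3])"
    then show "0 < (ys @ [3]) ! j" using lo[of "Suc j"] by simp
  next
    fix s t assume st: "1 \<le> s" "1 \<le> t" "s + t < length (ys @ [3]) + 1"
    show "?x (s + t) \<le> ?x s + ?x t"
    proof (cases "s + t = ?n + 1")
      case True
      have "s - 1 < ?n" and mirror: "?n - Suc (s - 1) = t - 1" using True st by simp_all
      with no_ones have "\<not> (ys ! (s - 1) = 1 \<and> ys ! (t - 1) = 1)"
        unfolding no_mirrored_ones_nth by (metis mirror)
      then show ?thesis
        using True st part_in[of s] part_in[of t] by (auto simp: nth_append)
    next
      case False
      then show ?thesis using hi[of "s + t"] lo[of s] lo[of t] st by simp
    qed
  next
    fix s t assume st: "1 \<le> s" "1 \<le> t" "s + t < length (ys @ [3]) + 1"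
    have "?x (?n + 2 - s - t) \<le> 2" by (rule hi) (use st in auto)
    moreover have "1 \<le> ?x (?n + 2 - s)" "1 \<le> ?x (?n + 2 - t)" by (rule lo; use st in auto)+
    ultimately show "?x (length (ys @ [3]) + 1 - s - t)
                 \<le> ?x (length (ys @ [3]) + 1 - s) + ?x (length (ys @ [3]) + 1 - t) + 1"
      by simp
  qed
qed

definition mirror_free_comps :: "nat \<Rightarrow> nat list set" where
  "mirror_free_comps h = {ys. set ys \<subseteq> {1, 2} \<and> no_mirrored_ones ys \<and> sum_list ys = h}"

lemma mirror_free_comps_cases:
  "ys \<in> mirror_free_comps h \<longleftrightarrow>
       (ys = [] \<and> h = 0) \<or> (ys = [2] \<and> h = 2)
     \<or> (\<exists>zs \<in> mirror_free_comps (h - 3). 3 \<le> h \<and> ys = 1 # zs @ [2])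
     \<or> (\<exists>zs \<in> mirror_free_comps (h - 3). 3 \<le> h \<and> ys = 2 # zs @ [1])
     \<or> (\<exists>zs \<in> mirror_free_comps (h - 4). 4 \<le> h \<and> ys = 2 # zs @ [2])"
proof (cases "2 \<le> length ys")
  case True
  then obtain a zs b where "ys = a # zs @ [b]"
    by (cases ys; cases "tl ys" rule: rev_exhaust) auto
  then show ?thesis
    by (auto simp: mirror_free_comps_def no_mirrored_ones_Cons_snoc)
next
  case False
  then consider "ys = []" | a where "ys = [a]"
    by (cases ys; cases "tl ys") auto
  then show ?thesis
    by cases (auto simp: mirror_free_comps_def no_mirrored_ones_def)
qed

fun mirror_free_count :: "nat \<Rightarrow> nat" where
  "mirror_free_count 0 = 1"
| "mirror_free_count (Suc 0) = 0"
| "mirror_free_count (Suc (Suc 0)) = 1"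
| "mirror_free_count (Suc (Suc (Suc 0))) = 2"
| "mirror_free_count (Suc (Suc (Suc (Suc n)))) =
     2 * mirror_free_count (Suc n) + mirror_free_count n"

lemma finite_card_mirror_free_comps:
  "finite (mirror_free_comps h) \<and> card (mirror_free_comps h) = mirror_free_count h"
proof (induction h rule: mirror_free_count.induct)
  case 1
  have "mirror_free_comps 0 = {[]}" using mirror_free_comps_cases[of _ 0] by auto
  then show ?case by simp
next
  case 2
  have "mirror_free_comps 1 = {}" using mirror_free_comps_cases[of _ 1] by auto
  then show ?case by simp
next
  case 3
  have "mirror_free_comps 2 = {[2]}" using mirror_free_comps_cases[of _ 2] by auto
  then show ?case by (simp add: numeral_2_eq_2)
next
  case 4
  have "mirror_free_comps 0 = {[]}" using mirror_free_comps_cases[of _ 0] by auto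
  then have "mirror_free_comps 3 = {[1, 2], [2, 1]}" using mirror_free_comps_cases[of _ 3] by auto
  then show ?case by (simp add: numeral_3_eq_3)
next
  case (5 n)
  let ?wrap = "\<lambda>a b zs. a # zs @ [b :: nat]"
  let ?A = "?wrap 1 2 ` mirror_free_comps (Suc n)" and ?B = "?wrap 2 1 ` mirror_free_comps (Suc n)"
    and ?C = "?wrap 2 2 ` mirror_free_comps n"
  have split: "mirror_free_comps (Suc (Suc (Suc (Suc n)))) = ?A \<union> ?B \<union> ?C"
    using mirror_free_comps_cases[of _ "Suc (Suc (Suc (Suc n)))"]
    by (auto simp: numeral_3_eq_3 numeral_eq_Suc)
  have inj: "inj_on (?wrap a b) X" for a b X by (auto simp: inj_on_def)
  have "card (?A \<union> ?B \<union> ?C) = card ?A + card ?B + card ?C"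
    using 5 by (subst card_Un_disjoint; auto)+
  also have "\<dots> = 2 * mirror_free_count (Suc n) + mirror_free_count n"
    using 5 by (simp add: card_image[OF inj])
  finally show ?case using split 5 by simp
qed

lemma last_3_parts_12_iff:
  fixes xs :: "nat list"
  shows "(xs \<noteq> [] \<and> last xs = 3 \<and> (\<forall>i < length xs - 1. xs ! i \<in> {1, 2})) \<longleftrightarrow>
     (\<exists>ys. xs = ys @ [3] \<and> set ys \<subseteq> {1, 2})"
proof
  assume xs: "xs \<noteq> [] \<and> last xs = 3 \<and> (\<forall>i < length xs - 1. xs ! i \<in> {1, 2})"
  then have "xs = butlast xs @ [3]" by (metis append_butlast_last_id)
  moreover have "set (butlast xs) \<subseteq> {1, 2}"
    using xs by (fastforce simp: in_set_conv_nth nth_butlast)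
  ultimately show "\<exists>ys. xs = ys @ [3] \<and> set ys \<subseteq> {1, 2}" by blast
next
  assume "\<exists>ys. xs = ys @ [3] \<and> set ys \<subseteq> {1, 2}"
  then show "xs \<noteq> [] \<and> last xs = 3 \<and> (\<forall>i < length xs - 1. xs ! i \<in> {1, 2})"
    by (force simp: nth_append subset_iff)
qed

lemma ctilde1_eq_mirror_free_count:
  "ctilde1 g = (if 3 \<le> g then mirror_free_count (g - 3) else 0)"
proof -
  have "{xs. nsg_comp xs \<and> genus xs = g \<and> xs \<noteq> [] \<and> last xs = 3 \<and>
             (\<forall>i < length xs - 1. xs ! i \<in> {1, 2})}
      = (\<lambda>ys. ys @ [3]) ` {ys. set ys \<subseteq> {1, 2} \<and> no_mirrored_ones ys \<and> sum_list ys + 3 = g}"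
    (is "?L = ?R")
  proof (rule set_eqI)
    fix xs
    have "xs \<in> ?L \<longleftrightarrow> (\<exists>ys. xs = ys @ [3] \<and> set ys \<subseteq> {1, 2} \<and> nsg_comp xs \<and> genus xs = g)"
      using last_3_parts_12_iff[of xs] by blast
    also have "\<dots> \<longleftrightarrow> xs \<in> ?R"
      using nsg_comp_snoc_3_iff by (auto simp: genus_def)
    finally show "xs \<in> ?L \<longleftrightarrow> xs \<in> ?R" .
  qed
  also have "\<dots> = (\<lambda>ys. ys @ [3]) ` (if 3 \<le> g then mirror_free_comps (g - 3) else {})"
    by (auto simp: mirror_free_comps_def)
  finally show ?thesis unfolding ctilde1_def
    using finite_card_mirror_free_comps[of "g - 3"] by (simp add: card_image inj_on_def)
qed

lemma fps_mirror_free_count: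
  "Abs_fps (\<lambda>h. real (mirror_free_count h)) = (1 + fps_X ^ 2) / (1 - (2 * fps_X ^ 3 + fps_X ^ 4))"
proof -
  let ?A = "Abs_fps (\<lambda>h. real (mirror_free_count h))"
  let ?D = "1 - (2 * fps_X ^ 3 + fps_X ^ 4) :: real fps"
  have rec: "real (mirror_free_count h) = (if h = 0 then 1 else 0) + (if h = 2 then 1 else 0)
      + (if 3 \<le> h then 2 * real (mirror_free_count (h - 3)) else 0)
      + (if 4 \<le> h then real (mirror_free_count (h - 4)) else 0)" for h
    by (cases h rule: mirror_free_count.cases) (simp_all add: numeral_eq_Suc)
  have "?D * ?A = ?A - (fps_X ^ 3 * ?A + fps_X ^ 3 * ?A) - fps_X ^ 4 * ?A"
    by (simp only: left_diff_distrib distrib_right mult_2 mult_1_left diff_diff_eq)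
  also have "\<dots> = 1 + fps_X ^ 2"
  proof (rule fps_ext)
    fix n
    show "fps_nth (?A - (fps_X ^ 3 * ?A + fps_X ^ 3 * ?A) - fps_X ^ 4 * ?A) n
            = fps_nth (1 + fps_X ^ 2) n"
      unfolding fps_sub_nth fps_add_nth fps_X_power_mult_nth fps_X_power_nth fps_one_nth
        fps_nth_Abs_fps rec[of n]
      by auto
  qed
  finally have "?D * ?A = 1 + fps_X ^ 2" .
  moreover have "?D \<noteq> 0"
  proof
    assume "?D = 0"
    then have "fps_nth ?D 0 = 0" by simp
    then show False by simp
  qed
  ultimately show ?thesis by (metis nonzero_mult_div_cancel_left)
qed

lemma mirror_free_count_le: "real (mirror_free_count h) \<le> (3 / 2) ^ h"
proof (induction h rule: mirror_free_count.induct)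
  case (5 n)
  have "real (mirror_free_count (Suc (Suc (Suc (Suc n)))))
          \<le> 2 * (3 / 2) ^ Suc n + (3 / 2) ^ n"
    using 5 by simp
  also have "\<dots> \<le> (3 / 2) ^ Suc (Suc (Suc (Suc n)))" by simp
  finally show ?case .
qed (simp_all add: numeral_eq_Suc)

lemma mirror_free_count_weighted_sums:
  fixes q :: real
  assumes "0 \<le> q" "q < 2 / 3"
  shows "(\<lambda>h. real (mirror_free_count h) * q ^ h) sums ((1 + q ^ 2) / (1 - 2 * q ^ 3 - q ^ 4))"
proof -
  define b where "b h = real (mirror_free_count h) * q ^ h" for h
  have "summable b"
  proof (rule summable_comparison_test')
    show "summable (\<lambda>n. (3 / 2 * q) ^ n)" using assms by (intro summable_geometric) simp
    fix n
    have "norm (b n) = real (mirror_free_count n) * q ^ n" using assms by (simp add: b_def)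
    also have "\<dots> \<le> (3 / 2) ^ n * q ^ n"
      using assms by (intro mult_right_mono mirror_free_count_le) simp
    also have "\<dots> = (3 / 2 * q) ^ n" by (rule power_mult_distrib[symmetric])
    finally show "norm (b n) \<le> (3 / 2 * q) ^ n" .
  qed
  then obtain S where bS: "b sums S" unfolding summable_def by blast
  have shifted: "(\<lambda>i. b (i + k)) sums (S - sum b {..<k})" for k
    using bS sums_iff_shift[of b k] by simp
  have "(\<lambda>i. b (i + 4)) = (\<lambda>i. 2 * q ^ 3 * b (i + 1) + q ^ 4 * b i)"
    by (auto simp: b_def numeral_eq_Suc algebra_simps)
  then have "(\<lambda>i. b (i + 4)) sums (2 * q ^ 3 * (S - sum b {..<1}) + q ^ 4 * S)"
    using shifted[of 1] bS by (auto intro!: sums_add sums_mult)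
  with shifted[of 4] have "S - sum b {..<4} = 2 * q ^ 3 * (S - sum b {..<1}) + q ^ 4 * S"
    using sums_unique2 by blast
  then have "S * (1 - 2 * q ^ 3 - q ^ 4) = 1 + q ^ 2"
    by (simp add: b_def numeral_eq_Suc lessThan_Suc algebra_simps)
  moreover have "2 * q ^ 3 + q ^ 4 < 1"
  proof -
    have "2 * q ^ 3 + q ^ 4 \<le> 2 * (2 / 3) ^ 3 + (2 / 3) ^ 4"
      using assms by (intro add_mono mult_left_mono power_mono) auto
    also have "\<dots> < 1" by (simp add: power_numeral_reduce)
    finally show ?thesis .
  qed
  ultimately have "S = (1 + q ^ 2) / (1 - 2 * q ^ 3 - q ^ 4)"
    by (simp add: field_simps)
  then show ?thesis using bS by (simp add: b_def[abs_def])
qed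

lemma inverse_golden_ratio:
  defines "q \<equiv> 1 / ((1 + sqrt 5) / 2) :: real"
  shows "0 < q" and "q < 2 / 3" and "1 - 2 * q ^ 3 - q ^ 4 = q ^ 2"
    and "q + q ^ 3 = (3 * sqrt 5 - 5) / 2"
proof -
  have "2 < sqrt (5 :: real)" by (rule real_less_rsqrt) simp
  moreover have "sqrt (5 :: real) < 7 / 3" by (rule real_less_lsqrt) (simp_all add: power2_eq_square)
  moreover have q: "q = (sqrt 5 - 1) / 2"
  proof -
    have "(1 + sqrt 5) * (sqrt 5 - 1) = (4 :: real)" by (simp add: algebra_simps)
    moreover have "0 < 1 + sqrt (5 :: real)" by (simp add: add_pos_nonneg)
    ultimately show ?thesis by (simp add: q_def field_simps)
  qed
  ultimately show "0 < q" "q < 2 / 3" by simp_all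
  have q2: "q ^ 2 = 1 - q" by (subst (1 2) q) (simp add: field_simps power2_eq_square)
  have q3: "q ^ 3 = 2 * q - 1"
  proof -
    have "q ^ 3 = q * q ^ 2" by (simp add: power3_eq_cube power2_eq_square)
    also have "\<dots> = q * (1 - q)" by (simp only: q2)
    also have "\<dots> = q - q ^ 2" by (simp add: algebra_simps power2_eq_square)
    finally show ?thesis by (simp add: q2)
  qed
  have "q ^ 4 = q * q ^ 3" by (simp add: power_numeral_reduce)
  also have "\<dots> = 2 * q ^ 2 - q" by (simp add: q3 algebra_simps power2_eq_square)
  finally have q4: "q ^ 4 = 2 - 3 * q" by (simp add: q2)
  show "1 - 2 * q ^ 3 - q ^ 4 = q ^ 2" by (simp add: q2 q3 q4)
  show "q + q ^ 3 = (3 * sqrt 5 - 5) / 2" by (simp add: q3, subst q) (simp add: field_simps)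
qed

lemma fps_ctilde1:
  "Abs_fps (\<lambda>g. if 3 \<le> g then real (ctilde1 g) else 0)
     = (1 + fps_X ^ 2) / (1 - (2 * fps_X ^ 3 + fps_X ^ 4)) * fps_X ^ 3"
proof -
  have "Abs_fps (\<lambda>g. if 3 \<le> g then real (ctilde1 g) else 0)
          = Abs_fps (\<lambda>h. real (mirror_free_count h)) * fps_X ^ 3"
    by (rule fps_ext) (simp add: fps_X_power_mult_right_nth ctilde1_eq_mirror_free_count)
  then show ?thesis by (simp only: fps_mirror_free_count)
qed

lemma ctilde1_weighted_sums:
  fixes q :: real
  assumes "0 \<le> q" "q < 2 / 3"
  shows "(\<lambda>g. real (ctilde1 g) * q ^ g) sums (q ^ 3 * ((1 + q ^ 2) / (1 - 2 * q ^ 3 - q ^ 4)))"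
proof -
  have "(\<lambda>h. q ^ 3 * (real (mirror_free_count h) * q ^ h))
          sums (q ^ 3 * ((1 + q ^ 2) / (1 - 2 * q ^ 3 - q ^ 4)))"
    using mirror_free_count_weighted_sums[OF assms] by (rule sums_mult)
  then have "(\<lambda>h. real (ctilde1 (h + 3)) * q ^ (h + 3))
               sums (q ^ 3 * ((1 + q ^ 2) / (1 - 2 * q ^ 3 - q ^ 4)))"
    by (simp add: ctilde1_eq_mirror_free_count power_add mult_ac)
  then show ?thesis
    by (subst (asm) sums_zero_iff_shift) (auto simp: ctilde1_eq_mirror_free_count)
qed

theorem proposition16p2:
  "Abs_fps (\<lambda>g. if 3 \<le> g then real (ctilde1 g) else 0)
     = (1 + fps_X ^ 2) / (1 - (2 * fps_X ^ 3 + fps_X ^ 4)) * fps_X ^ 3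
   \<and> (let \<omega> = (1 + sqrt 5) / 2 :: real in
        (\<lambda>g. real (ctilde1 g) * (1 / \<omega>) ^ g) sums (1 / \<omega> + (1 / \<omega>) ^ 3)
      \<and> \<bar>(1 / \<omega> + (1 / \<omega>) ^ 3) - 0.854101966\<bar> < 1 / 10 ^ 9)"
proof -
  define q :: real where "q = 1 / ((1 + sqrt 5) / 2)"
  note q = inverse_golden_ratio[folded q_def]
  have "q ^ 3 * ((1 + q ^ 2) / (1 - 2 * q ^ 3 - q ^ 4)) = q + q ^ 3"
    using q(1) unfolding q(3) by (simp add: field_simps power2_eq_square power3_eq_cube)
  with ctilde1_weighted_sums[of q] q(1,2)
  have sums: "(\<lambda>g. real (ctilde1 g) * q ^ g) sums (q + q ^ 3)" by simp
  have "2.2360679774 < sqrt (5 :: real)" by (rule real_less_rsqrt) (simp add: power2_eq_square)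
  moreover have "sqrt (5 :: real) < 2.2360679776"
    by (rule real_less_lsqrt) (simp_all add: power2_eq_square)
  ultimately have "\<bar>(q + q ^ 3) - 0.854101966\<bar> < 1 / 10 ^ 9" using q(4) by simp
  with sums fps_ctilde1 show ?thesis
    unfolding Let_def q_def[symmetric] by blast
qed

end
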